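(* Let $n\ge 1$, let $L>0$ and let $D\subseteq\mathbb{R}$ be compact. Let $T$ be an input-dependent CPTP map on $n$ qubits, i.e. for each $x\in D\cap[-L,L]$, $T(x)$ is a completely positive trace-preserving linear map on the space of $2^n\times 2^n$ complex matrices. Suppose there is $\epsilon$ with $0<\epsilon\le 1$ such that for all $x\in D\cap[-L,L]$, $$\|T(x)|_{H_0(2^n)}\|_{2-2}:=\sup_{A\in H_0(2^n),\,A\neq 0}\frac{\|T(x)A\|_2}{\|A\|_2}\le 1-\epsilon,$$ where $H_0(2^n)$ is the real vector space of $2^n\times 2^n$ traceless Hermitian matrices. Then $T$ is convergent with respect to $K_L(D)$: there exists a sequence $\{\delta_k\}_{k>0}$ with $\lim_{k\to\infty}\delta_k=0$ such that for every input sequence $u=\{u_k\}_{k\ge 1}$ with $u_k\in D\cap[-L,L]$ for all $k$, and any two sequences of density operators $\{\rho_{j,k}\}_{k\ge 0}$ ($j=1,2$) satisfying $\rho_{j,k}=T(u_k)\rho_{j,k-1}$ for $k\ge 1$, one has $\|\rho_{1,k}-\rho_{2,k}\|_2\le\delta_k$ for all $k>0$. Moreover, any pair of initial density operators converge uniformly to one another under $T$ (i.e. the sequence $\delta_k$ can be chosen independent of the initial density operators and of the input sequence).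
   Context: $\|\cdot\|_2$ denotes the Schatten 2-norm (Hilbert–Schmidt norm) $\|A\|_2=\sqrt{{\rm Tr}(A^*A)}$. A density operator is a positive semidefinite $2^n\times 2^n$ matrix of unit trace. $K_L(D)$ denotes the set of real sequences $u=\{u_k\}_{k\in\mathbb{Z}}$ with $u_k\in D\cap[-L,L]$ for all $k$. *)

theory Defs
  imports "HOL-Analysis.Analysis" "Jordan_Normal_Form.Matrix"
begin

definition ctrans :: "complex mat \<Rightarrow> complex mat" where
  "ctrans A = mat (dim_col A) (dim_row A) (\<lambda>(i,j). cnj (A $$ (j,i)))"

definition mtrace :: "complex mat \<Rightarrow> complex" where
  "mtrace A = (\<Sum>i<dim_row A. A $$ (i,i))"

definition hs_norm :: "complex mat \<Rightarrow> real" where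
  "hs_norm A = sqrt (Re (mtrace (ctrans A * A)))"

definition hermitian :: "nat \<Rightarrow> complex mat \<Rightarrow> bool" where
  "hermitian d A \<longleftrightarrow> A \<in> carrier_mat d d \<and> ctrans A = A"

definition psd :: "nat \<Rightarrow> complex mat \<Rightarrow> bool" where
  "psd d A \<longleftrightarrow> hermitian d A \<and>
     (\<forall>v \<in> carrier_vec d. Im (conjugate v \<bullet> (A *\<^sub>v v)) = 0 \<and> Re (conjugate v \<bullet> (A *\<^sub>v v)) \<ge> 0)"

definition density :: "nat \<Rightarrow> complex mat \<Rightarrow> bool" where
  "density d \<rho> \<longleftrightarrow> psd d \<rho> \<and> mtrace \<rho> = 1"

definition H0 :: "nat \<Rightarrow> complex mat set" where
  "H0 d = {A. hermitian d A \<and> mtrace A = 0}"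

definition lin_map :: "nat \<Rightarrow> (complex mat \<Rightarrow> complex mat) \<Rightarrow> bool" where
  "lin_map d T \<longleftrightarrow>
     (\<forall>A \<in> carrier_mat d d. T A \<in> carrier_mat d d) \<and>
     (\<forall>A \<in> carrier_mat d d. \<forall>B \<in> carrier_mat d d. T (A + B) = T A + T B) \<and>
     (\<forall>A \<in> carrier_mat d d. \<forall>c. T (c \<cdot>\<^sub>m A) = c \<cdot>\<^sub>m T A)"

(* id_m \<otimes> T applied to an (m*d) x (m*d) matrix viewed as an m x m array of d x d blocks *)
definition ampl :: "nat \<Rightarrow> nat \<Rightarrow> (complex mat \<Rightarrow> complex mat) \<Rightarrow> complex mat \<Rightarrow> complex mat" where
  "ampl m d T M = mat (m*d) (m*d) (\<lambda>(p,q).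
      T (mat d d (\<lambda>(a,b). M $$ ((p div d)*d + a, (q div d)*d + b))) $$ (p mod d, q mod d))"

definition completely_positive :: "nat \<Rightarrow> (complex mat \<Rightarrow> complex mat) \<Rightarrow> bool" where
  "completely_positive d T \<longleftrightarrow> (\<forall>m \<ge> 1. \<forall>M. psd (m*d) M \<longrightarrow> psd (m*d) (ampl m d T M))"

definition trace_preserving :: "nat \<Rightarrow> (complex mat \<Rightarrow> complex mat) \<Rightarrow> bool" where
  "trace_preserving d T \<longleftrightarrow> (\<forall>A \<in> carrier_mat d d. mtrace (T A) = mtrace A)"

definition CPTP :: "nat \<Rightarrow> (complex mat \<Rightarrow> complex mat) \<Rightarrow> bool" where
  "CPTP d T \<longleftrightarrow> lin_map d T \<and> completely_positive d T \<and> trace_preserving d T"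

definition norm22_H0 :: "nat \<Rightarrow> (complex mat \<Rightarrow> complex mat) \<Rightarrow> real" where
  "norm22_H0 d T = Sup {hs_norm (T A) / hs_norm A | A. A \<in> H0 d \<and> A \<noteq> 0\<^sub>m d d}"

end

theory Submission
  imports Defs
begin

(* The difference of two density operators is traceless Hermitian, and each step of the
   recursion applies one linear map T(u_k), so the difference shrinks by a factor 1 - \<epsilon> per
   step.  Positivity (2x2 principal minors) and unit trace bound every entry of a density
   operator by 1, so the initial difference has Hilbert-Schmidt norm at most 2 d with d = 2^n.
   Hence \<delta>_k = 2 d (1 - \<epsilon>)^k works for every input sequence and all initial states. *)

lemma hs_norm_eq_L2_set:
  assumes "A \<in> carrier_mat r c"
  shows "hs_norm A = L2_set (\<lambda>(i,j). cmod (A $$ (i,j))) ({..<r} \<times> {..<c})"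
proof -
  have dims: "dim_row A = r" "dim_col A = c" using assms by auto
  have diag: "(ctrans A * A) $$ (j,j) = (\<Sum>i<r. complex_of_real ((cmod (A $$ (i,j)))\<^sup>2))"
    if "j < c" for j
  proof -
    have "(ctrans A * A) $$ (j,j) = row (ctrans A) j \<bullet> col A j"
      using that dims by (simp add: ctrans_def)
    also have "\<dots> = (\<Sum>i<r. cnj (A $$ (i,j)) * A $$ (i,j))"
      using that dims unfolding scalar_prod_def by (simp add: ctrans_def atLeast0LessThan)
    also have "\<dots> = (\<Sum>i<r. complex_of_real ((cmod (A $$ (i,j)))\<^sup>2))"
      by (intro sum.cong refl) (metis complex_norm_square mult.commute)
    finally show ?thesis .
  qed
  have "Re (mtrace (ctrans A * A)) = (\<Sum>j<c. \<Sum>i<r. (cmod (A $$ (i,j)))\<^sup>2)"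
    unfolding mtrace_def using dims diag by (simp add: ctrans_def)
  also have "\<dots> = (\<Sum>(i,j)\<in>{..<r} \<times> {..<c}. (cmod (A $$ (i,j)))\<^sup>2)"
    by (subst sum.swap) (simp add: sum.cartesian_product)
  finally show ?thesis
    unfolding hs_norm_def L2_set_def by (simp add: case_prod_unfold)
qed

lemma hs_norm_nonneg: "0 \<le> hs_norm A"
  using hs_norm_eq_L2_set[OF carrier_matI[OF refl refl]] by simp

lemma hs_norm_triangle:
  assumes "A \<in> carrier_mat r c" "B \<in> carrier_mat r c"
  shows "hs_norm (A + B) \<le> hs_norm A + hs_norm B"
proof -
  have "hs_norm (A + B) = L2_set (\<lambda>(i,j). cmod ((A + B) $$ (i,j))) ({..<r} \<times> {..<c})"
    using assms by (intro hs_norm_eq_L2_set) simp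
  also have "\<dots> \<le> L2_set (\<lambda>x. (\<lambda>(i,j). cmod (A $$ (i,j))) x + (\<lambda>(i,j). cmod (B $$ (i,j))) x)
                   ({..<r} \<times> {..<c})"
    by (rule L2_set_mono) (use assms in \<open>auto simp: norm_triangle_ineq\<close>)
  also have "\<dots> \<le> hs_norm A + hs_norm B"
    unfolding hs_norm_eq_L2_set[OF assms(1)] hs_norm_eq_L2_set[OF assms(2)]
    by (rule L2_set_triangle_ineq)
  finally show ?thesis .
qed

lemma hs_norm_smult:
  assumes "A \<in> carrier_mat r c"
  shows "hs_norm (a \<cdot>\<^sub>m A) = cmod a * hs_norm A"
  unfolding hs_norm_eq_L2_set[OF smult_carrier_mat[OF assms]] hs_norm_eq_L2_set[OF assms]
  by (subst L2_set_right_distrib) (use assms in \<open>auto intro!: L2_set_cong simp: norm_mult\<close>)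

lemma hs_norm_zero_mat [simp]: "hs_norm (0\<^sub>m r c) = 0"
  unfolding hs_norm_eq_L2_set[OF zero_carrier_mat] by (simp add: L2_set_0')

lemma entry_le_hs_norm:
  assumes "A \<in> carrier_mat r c" "i < r" "j < c"
  shows "cmod (A $$ (i,j)) \<le> hs_norm A"
  unfolding hs_norm_eq_L2_set[OF assms(1)]
  using member_le_L2_set[of "{..<r} \<times> {..<c}" "(i,j)" "\<lambda>(i,j). cmod (A $$ (i,j))"] assms
  by auto

lemma hs_norm_eq_0_iff:
  assumes "A \<in> carrier_mat r c"
  shows "hs_norm A = 0 \<longleftrightarrow> A = 0\<^sub>m r c"
proof
  assume "hs_norm A = 0"
  then have "A $$ (i,j) = 0" if "i < r" "j < c" for i j
    using entry_le_hs_norm[OF assms that] by simp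
  then show "A = 0\<^sub>m r c"
    using assms by (intro eq_matI) auto
qed simp

lemma hs_norm_le_entry_bound:
  assumes "A \<in> carrier_mat r c" "\<And>i j. i < r \<Longrightarrow> j < c \<Longrightarrow> cmod (A $$ (i,j)) \<le> M"
  shows "hs_norm A \<le> sqrt (real (r * c)) * M"
proof -
  have "0 \<le> M" if "0 < r" "0 < c"
    using assms(2)[OF that] norm_ge_zero order_trans by blast
  moreover have "hs_norm A \<le> L2_set (\<lambda>_. M) ({..<r} \<times> {..<c})"
    unfolding hs_norm_eq_L2_set[OF assms(1)] by (rule L2_set_mono) (use assms in auto)
  ultimately show ?thesis by (cases "r = 0 \<or> c = 0") (auto simp: L2_set_constant)
qed

lemma
  assumes "lin_map d T" "A \<in> carrier_mat d d"
  shows lin_map_carrier: "T A \<in> carrier_mat d d"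
    and lin_map_add: "B \<in> carrier_mat d d \<Longrightarrow> T (A + B) = T A + T B"
    and lin_map_smult: "T (a \<cdot>\<^sub>m A) = a \<cdot>\<^sub>m T A"
  using assms unfolding lin_map_def by blast+

lemma lin_map_zero:
  assumes "lin_map d T"
  shows "T (0\<^sub>m d d) = 0\<^sub>m d d"
proof -
  have "T (0\<^sub>m d d) = T (0 \<cdot>\<^sub>m 0\<^sub>m d d)" by simp
  also have "\<dots> = 0 \<cdot>\<^sub>m T (0\<^sub>m d d)" by (rule lin_map_smult[OF assms zero_carrier_mat])
  also have "\<dots> = 0\<^sub>m d d"
    using lin_map_carrier[OF assms zero_carrier_mat] by (intro eq_matI) auto
  finally show ?thesis .
qed

lemma lin_map_diff:
  assumes T: "lin_map d T" and A: "A \<in> carrier_mat d d" and B: "B \<in> carrier_mat d d"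
  shows "T (A - B) = T A - T B"
proof -
  have "A - B = A + (-1) \<cdot>\<^sub>m B" using A B by (intro eq_matI) auto
  then have "T (A - B) = T A + (-1) \<cdot>\<^sub>m T B"
    using A B by (simp add: lin_map_add[OF T] lin_map_smult[OF T])
  also have "\<dots> = T A - T B"
    using lin_map_carrier[OF T A] lin_map_carrier[OF T B] by (intro eq_matI) auto
  finally show ?thesis .
qed

definition matrix_unit :: "nat \<Rightarrow> nat \<times> nat \<Rightarrow> complex mat" where
  "matrix_unit d x = mat d d (\<lambda>p. if p = x then 1 else 0)"

definition restrict_entries :: "nat \<Rightarrow> (nat \<times> nat) set \<Rightarrow> complex mat \<Rightarrow> complex mat" where
  "restrict_entries d S A = mat d d (\<lambda>p. if p \<in> S then A $$ p else 0)"

lemma matrix_unit_carrier [simp]: "matrix_unit d x \<in> carrier_mat d d"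
  unfolding matrix_unit_def by simp

lemma restrict_entries_carrier [simp]: "restrict_entries d S A \<in> carrier_mat d d"
  unfolding restrict_entries_def by simp

lemma hs_norm_lin_map_restrict_entries_le:
  assumes T: "lin_map d T" and "finite S"
  shows "hs_norm (T (restrict_entries d S A))
           \<le> (\<Sum>x\<in>S. cmod (A $$ x) * hs_norm (T (matrix_unit d x)))"
  using \<open>finite S\<close>
proof (induction S rule: finite_induct)
  case empty
  have "restrict_entries d {} A = 0\<^sub>m d d"
    unfolding restrict_entries_def by (intro eq_matI) auto
  then show ?case using lin_map_zero[OF T] by simp
next
  case (insert x S)
  have "restrict_entries d (insert x S) A = restrict_entries d S A + A $$ x \<cdot>\<^sub>m matrix_unit d x"
    using insert(2) unfolding restrict_entries_def matrix_unit_def by (intro eq_matI) auto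
  then have "T (restrict_entries d (insert x S) A)
               = T (restrict_entries d S A) + A $$ x \<cdot>\<^sub>m T (matrix_unit d x)"
    by (simp add: lin_map_add[OF T] lin_map_smult[OF T])
  then have "hs_norm (T (restrict_entries d (insert x S) A))
               \<le> hs_norm (T (restrict_entries d S A)) + cmod (A $$ x) * hs_norm (T (matrix_unit d x))"
    using hs_norm_triangle hs_norm_smult lin_map_carrier[OF T]
    by (metis matrix_unit_carrier restrict_entries_carrier smult_carrier_mat)
  then show ?case using insert by simp
qed

lemma lin_map_hs_bounded:
  assumes T: "lin_map d T"
  obtains K where "\<And>A. A \<in> carrier_mat d d \<Longrightarrow> hs_norm (T A) \<le> K * hs_norm A"
proof
  fix A :: "complex mat" assume A: "A \<in> carrier_mat d d"
  let ?I = "{..<d} \<times> {..<d}"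
  have "restrict_entries d ?I A = A"
    using A unfolding restrict_entries_def by (intro eq_matI) auto
  then have "hs_norm (T A) \<le> (\<Sum>x\<in>?I. cmod (A $$ x) * hs_norm (T (matrix_unit d x)))"
    using hs_norm_lin_map_restrict_entries_le[OF T, of ?I A] by simp
  also have "\<dots> \<le> (\<Sum>x\<in>?I. hs_norm A * hs_norm (T (matrix_unit d x)))"
    using entry_le_hs_norm[OF A] by (intro sum_mono mult_right_mono) (auto simp: hs_norm_nonneg)
  also have "\<dots> = (\<Sum>x\<in>?I. hs_norm (T (matrix_unit d x))) * hs_norm A"
    by (simp add: sum_distrib_left mult.commute)
  finally show "hs_norm (T A) \<le> (\<Sum>x\<in>?I. hs_norm (T (matrix_unit d x))) * hs_norm A" .
qed

lemma hs_norm_le_norm22_H0: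
  assumes T: "lin_map d T" and A: "A \<in> H0 d"
  shows "hs_norm (T A) \<le> norm22_H0 d T * hs_norm A"
proof (cases "A = 0\<^sub>m d d")
  case True
  then show ?thesis using lin_map_zero[OF T] by simp
next
  case False
  have A_carrier: "A \<in> carrier_mat d d" using A unfolding H0_def hermitian_def by simp
  have pos: "0 < hs_norm A"
    using hs_norm_eq_0_iff[OF A_carrier] hs_norm_nonneg[of A] False by linarith
  obtain K where K: "\<And>B. B \<in> carrier_mat d d \<Longrightarrow> hs_norm (T B) \<le> K * hs_norm B"
    using lin_map_hs_bounded[OF T] by blast
  let ?R = "{hs_norm (T B) / hs_norm B | B. B \<in> H0 d \<and> B \<noteq> 0\<^sub>m d d}"
  \<comment> \<open>otherwise the Sup defining norm22_H0 would be an unspecified real\<close>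
  have bdd: "bdd_above ?R"
  proof (rule bdd_aboveI)
    fix r assume "r \<in> ?R"
    then obtain B where r: "r = hs_norm (T B) / hs_norm B" and B: "B \<in> carrier_mat d d"
      unfolding H0_def hermitian_def by blast
    show "r \<le> max K 0"
    proof (cases "hs_norm B = 0")
      case False
      then have "0 < hs_norm B" using hs_norm_nonneg[of B] by simp
      then have "r \<le> K" using K[OF B] unfolding r by (simp add: divide_le_eq)
      then show ?thesis by simp
    qed (simp add: r)
  qed
  have "hs_norm (T A) / hs_norm A \<in> ?R" using A False by blast
  then have "hs_norm (T A) / hs_norm A \<le> norm22_H0 d T"
    unfolding norm22_H0_def using bdd by (rule cSup_upper)
  then show ?thesis using pos by (simp add: divide_le_eq)
qed

lemma hermitian_entry_swap:
  assumes "hermitian d A" "i < d" "j < d"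
  shows "A $$ (j,i) = cnj (A $$ (i,j))"
proof -
  have "A \<in> carrier_mat d d" using assms(1) unfolding hermitian_def by simp
  then have "ctrans A $$ (j,i) = cnj (A $$ (i,j))"
    using assms(2,3) unfolding ctrans_def by simp
  then show ?thesis using assms(1) unfolding hermitian_def by simp
qed

lemma ctrans_diff:
  assumes "A \<in> carrier_mat r c" "B \<in> carrier_mat r c"
  shows "ctrans (A - B) = ctrans A - ctrans B"
  using assms unfolding ctrans_def by (intro eq_matI) auto

lemma hermitian_diff:
  assumes "hermitian d A" "hermitian d B"
  shows "hermitian d (A - B)"
  using assms ctrans_diff unfolding hermitian_def by (metis minus_carrier_mat)

lemma mtrace_diff:
  assumes "A \<in> carrier_mat d d" "B \<in> carrier_mat d d"
  shows "mtrace (A - B) = mtrace A - mtrace B"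
  using assms unfolding mtrace_def by (simp add: sum_subtractf)

lemma density_diff_in_H0:
  assumes "density d A" "density d B"
  shows "A - B \<in> H0 d"
proof -
  have "hermitian d A" "hermitian d B" "mtrace A = 1" "mtrace B = 1"
    using assms unfolding density_def psd_def by auto
  then show ?thesis
    using hermitian_diff mtrace_diff unfolding H0_def hermitian_def by auto
qed

lemma psd_diag_nonneg:
  assumes "psd d \<rho>" "p < d"
  shows "0 \<le> Re (\<rho> $$ (p,p))"
proof -
  have \<rho>: "\<rho> \<in> carrier_mat d d" using assms(1) unfolding psd_def hermitian_def by simp
  have "conjugate (unit_vec d p) = (unit_vec d p :: complex vec)"
    by (intro eq_vecI) (auto simp: unit_vec_def)
  then have "conjugate (unit_vec d p) \<bullet> (\<rho> *\<^sub>v unit_vec d p) = \<rho> $$ (p,p)"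
    using \<rho> assms(2) by simp
  then show ?thesis using assms(1) unfolding psd_def by (metis unit_vec_carrier)
qed

lemma quadratic_form_two_entries:
  assumes \<rho>: "\<rho> \<in> carrier_mat d d" and ij: "i < d" "j < d" "i \<noteq> j"
    and v: "v = vec d (\<lambda>p. if p = i then a else if p = j then b else 0)"
  shows "conjugate v \<bullet> (\<rho> *\<^sub>v v)
           = cnj a * (\<rho> $$ (i,i) * a + \<rho> $$ (i,j) * b) + cnj b * (\<rho> $$ (j,i) * a + \<rho> $$ (j,j) * b)"
proof -
  have two_entries: "(\<Sum>q\<in>{0..<d}. f q * (if q = i then x else if q = j then y else 0))
                       = f i * x + f j * y" for f :: "nat \<Rightarrow> complex" and x y
  proof -
    have "(\<Sum>q\<in>{0..<d}. f q * (if q = i then x else if q = j then y else 0))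
            = (\<Sum>q\<in>{0..<d}. (if q = i then f i * x else 0) + (if q = j then f j * y else 0))"
      using ij(3) by (intro sum.cong) auto
    then show ?thesis using ij by (simp add: sum.distrib)
  qed
  have entry: "(\<rho> *\<^sub>v v) $ p = \<rho> $$ (p,i) * a + \<rho> $$ (p,j) * b" if "p < d" for p
    using \<rho> that v two_entries[of "\<lambda>q. \<rho> $$ (p,q)"] by (simp add: scalar_prod_def)
  have "conjugate v \<bullet> (\<rho> *\<^sub>v v)
      = (\<Sum>p\<in>{0..<d}. (\<rho> *\<^sub>v v) $ p * (if p = i then cnj a else if p = j then cnj b else 0))"
    unfolding scalar_prod_def using \<rho> v by (intro sum.cong) (auto simp: mult.commute)
  also have "\<dots> = (\<rho> *\<^sub>v v) $ i * cnj a + (\<rho> *\<^sub>v v) $ j * cnj b"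
    by (rule two_entries)
  finally show ?thesis using entry[OF ij(1)] entry[OF ij(2)] by (simp add: algebra_simps)
qed

lemma psd_offdiag_entry_le:
  assumes psd: "psd d \<rho>" and ij: "i < d" "j < d" "i \<noteq> j"
  shows "2 * cmod (\<rho> $$ (i,j)) \<le> Re (\<rho> $$ (i,i)) + Re (\<rho> $$ (j,j))"
proof (cases "\<rho> $$ (i,j) = 0")
  case True
  then show ?thesis using psd_diag_nonneg[OF psd ij(1)] psd_diag_nonneg[OF psd ij(2)] by simp
next
  case False
  have \<rho>: "\<rho> \<in> carrier_mat d d" using psd unfolding psd_def hermitian_def by simp
  define z where "z = \<rho> $$ (i,j)"
  define r where "r = cmod z"
  define w where "w = cnj z / complex_of_real r"
  have "0 < r" using False unfolding r_def z_def by simp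
  moreover have "z * cnj z = complex_of_real (r\<^sup>2)"
    unfolding r_def by (rule complex_norm_square[symmetric])
  ultimately have zw: "z * w = complex_of_real r" and ww: "cnj w * w = 1"
    unfolding w_def by (simp_all add: field_simps power2_eq_square mult.commute)
  have zw': "cnj w * cnj z = complex_of_real r"
    using arg_cong[OF zw, of cnj] by (simp add: mult.commute)
  \<comment> \<open>the quadratic form at e_i - w e_j, where w rotates z = \<rho>_ij onto the positive real axis\<close>
  define v where "v = vec d (\<lambda>p. if p = i then 1 else if p = j then - w else 0)"
  have "conjugate v \<bullet> (\<rho> *\<^sub>v v) = \<rho> $$ (i,i) - z * w - cnj w * cnj z + cnj w * w * \<rho> $$ (j,j)"
    using quadratic_form_two_entries[OF \<rho> ij v_def] hermitian_entry_swap[of d \<rho> i j] psd ij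
    unfolding z_def psd_def by (simp add: algebra_simps)
  also have "\<dots> = \<rho> $$ (i,i) + \<rho> $$ (j,j) - 2 * complex_of_real r"
    using zw zw' ww by simp
  finally have "Re (conjugate v \<bullet> (\<rho> *\<^sub>v v)) = Re (\<rho> $$ (i,i)) + Re (\<rho> $$ (j,j)) - 2 * r"
    by simp
  moreover have "0 \<le> Re (conjugate v \<bullet> (\<rho> *\<^sub>v v))"
    using psd unfolding psd_def v_def by simp
  ultimately show ?thesis unfolding r_def z_def by simp
qed

lemma density_diag_le_one:
  assumes dens: "density d \<rho>" and p: "p < d"
  shows "Re (\<rho> $$ (p,p)) \<le> 1"
proof -
  have psd: "psd d \<rho>" and "mtrace \<rho> = 1" and "\<rho> \<in> carrier_mat d d"
    using dens unfolding density_def psd_def hermitian_def by auto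
  then have "(\<Sum>q<d. Re (\<rho> $$ (q,q))) = 1"
    unfolding mtrace_def by (metis Re_sum carrier_matD(1) one_complex.sel(1))
  moreover have "Re (\<rho> $$ (p,p)) \<le> (\<Sum>q<d. Re (\<rho> $$ (q,q)))"
    using p psd_diag_nonneg[OF psd] by (intro member_le_sum) auto
  ultimately show ?thesis by simp
qed

lemma density_entry_le_one:
  assumes dens: "density d \<rho>" and ij: "i < d" "j < d"
  shows "cmod (\<rho> $$ (i,j)) \<le> 1"
proof (cases "i = j")
  case True
  have psd: "psd d \<rho>" using dens unfolding density_def by simp
  then have "\<rho> $$ (i,i) = cnj (\<rho> $$ (i,i))"
    using hermitian_entry_swap ij(1) unfolding psd_def by blast
  then have "cmod (\<rho> $$ (i,i)) = Re (\<rho> $$ (i,i))"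
    using psd_diag_nonneg[OF psd ij(1)]
    by (metis Reals_cnj_iff cmod_eq_Re complex_is_Real_iff abs_of_nonneg)
  then show ?thesis using True density_diag_le_one[OF dens ij(1)] by simp
next
  case False
  have "psd d \<rho>" using dens unfolding density_def by simp
  then show ?thesis
    using psd_offdiag_entry_le[OF _ ij False] density_diag_le_one[OF dens ij(1)]
      density_diag_le_one[OF dens ij(2)] by fastforce
qed

lemma hs_norm_density_diff_le:
  assumes "density d A" "density d B"
  shows "hs_norm (A - B) \<le> 2 * real d"
proof -
  have A: "A \<in> carrier_mat d d" and B: "B \<in> carrier_mat d d"
    using assms unfolding density_def psd_def hermitian_def by auto
  have "cmod ((A - B) $$ (i,j)) \<le> 2" if "i < d" "j < d" for i j
    using A B that norm_triangle_ineq4[of "A $$ (i,j)" "B $$ (i,j)"]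
      density_entry_le_one[OF assms(1) that] density_entry_le_one[OF assms(2) that] by simp
  then have "hs_norm (A - B) \<le> sqrt (real (d * d)) * 2"
    using A B by (intro hs_norm_le_entry_bound) auto
  then show ?thesis by simp
qed

lemma density_trajectories_dist_le:
  fixes S :: "nat \<Rightarrow> complex mat \<Rightarrow> complex mat"
  assumes lin: "\<And>k. lin_map d (S k)" and contr: "\<And>k. norm22_H0 d (S k) \<le> c" and "0 \<le> c"
    and dens: "\<And>k. density d (\<rho>1 k)" "\<And>k. density d (\<rho>2 k)"
    and step: "\<And>k. \<rho>1 (Suc k) = S k (\<rho>1 k)" "\<And>k. \<rho>2 (Suc k) = S k (\<rho>2 k)"
  shows "hs_norm (\<rho>1 k - \<rho>2 k) \<le> 2 * real d * c ^ k"
proof (induction k)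
  case 0
  then show ?case using hs_norm_density_diff_le[OF dens] by simp
next
  case (Suc k)
  have "\<rho>1 k \<in> carrier_mat d d" "\<rho>2 k \<in> carrier_mat d d"
    using dens unfolding density_def psd_def hermitian_def by auto
  then have "\<rho>1 (Suc k) - \<rho>2 (Suc k) = S k (\<rho>1 k - \<rho>2 k)"
    unfolding step by (simp add: lin_map_diff[OF lin])
  then have "hs_norm (\<rho>1 (Suc k) - \<rho>2 (Suc k)) \<le> norm22_H0 d (S k) * hs_norm (\<rho>1 k - \<rho>2 k)"
    using hs_norm_le_norm22_H0[OF lin density_diff_in_H0[OF dens]] by simp
  also have "\<dots> \<le> c * hs_norm (\<rho>1 k - \<rho>2 k)"
    using contr hs_norm_nonneg by (rule mult_right_mono)
  also have "\<dots> \<le> c * (2 * real d * c ^ k)"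
    using Suc.IH \<open>0 \<le> c\<close> by (rule mult_left_mono)
  finally show ?case by (simp add: algebra_simps)
qed

theorem theorem1:
  fixes n :: nat and L \<epsilon> :: real and D :: "real set"
    and T :: "real \<Rightarrow> complex mat \<Rightarrow> complex mat"
  assumes "n \<ge> 1" and "L > 0" and "compact D"
    and "\<And>x. x \<in> D \<inter> {-L..L} \<Longrightarrow> CPTP (2^n) (T x)"
    and "0 < \<epsilon>" and "\<epsilon> \<le> 1"
    and "\<And>x. x \<in> D \<inter> {-L..L} \<Longrightarrow> norm22_H0 (2^n) (T x) \<le> 1 - \<epsilon>"
  shows "\<exists>\<delta> :: nat \<Rightarrow> real. \<delta> \<longlonglongrightarrow> 0 \<and>
    (\<forall>(u :: nat \<Rightarrow> real) (\<rho>1 :: nat \<Rightarrow> complex mat) (\<rho>2 :: nat \<Rightarrow> complex mat).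
       (\<forall>k \<ge> 1. u k \<in> D \<inter> {-L..L}) \<and>
       (\<forall>k. density (2^n) (\<rho>1 k) \<and> density (2^n) (\<rho>2 k)) \<and>
       (\<forall>k \<ge> 1. \<rho>1 k = T (u k) (\<rho>1 (k - 1)) \<and> \<rho>2 k = T (u k) (\<rho>2 (k - 1)))
       \<longrightarrow> (\<forall>k > 0. hs_norm (\<rho>1 k - \<rho>2 k) \<le> \<delta> k))"
proof (intro exI conjI allI impI)
  let ?\<delta> = "\<lambda>k. 2 * real (2^n) * (1 - \<epsilon>) ^ k"
  show "?\<delta> \<longlonglongrightarrow> 0"
    using assms(5,6) by (intro tendsto_mult_right_zero LIMSEQ_realpow_zero) auto
  fix u :: "nat \<Rightarrow> real" and \<rho>1 \<rho>2 :: "nat \<Rightarrow> complex mat" and k :: nat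
  assume "(\<forall>k \<ge> 1. u k \<in> D \<inter> {-L..L}) \<and>
       (\<forall>k. density (2^n) (\<rho>1 k) \<and> density (2^n) (\<rho>2 k)) \<and>
       (\<forall>k \<ge> 1. \<rho>1 k = T (u k) (\<rho>1 (k - 1)) \<and> \<rho>2 k = T (u k) (\<rho>2 (k - 1)))"
  then have u: "\<And>k. u (Suc k) \<in> D \<inter> {-L..L}"
    and dens: "\<And>k. density (2^n) (\<rho>1 k)" "\<And>k. density (2^n) (\<rho>2 k)"
    and step: "\<And>k. \<rho>1 (Suc k) = T (u (Suc k)) (\<rho>1 k)" "\<And>k. \<rho>2 (Suc k) = T (u (Suc k)) (\<rho>2 k)"
    by (metis diff_Suc_1 le_add1 plus_1_eq_Suc)+
  have lin: "\<And>k. lin_map (2^n) (T (u (Suc k)))"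
    using assms(4)[OF u] unfolding CPTP_def by blast
  show "hs_norm (\<rho>1 k - \<rho>2 k) \<le> ?\<delta> k"
    by (rule density_trajectories_dist_le[where S = "\<lambda>k. T (u (Suc k))"])
      (use lin assms(6) assms(7)[OF u] dens step in simp_all)
qed

end
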